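(* Consider the following model of a single group $s\in\{0,1\}$. Let $f_{q,s},f_{u,s}$ be probability densities on $\mathbb{R}$ with distribution functions $F_{q,s},F_{u,s}$, satisfying the monotone likelihood ratio property: $f_{q,s}(\theta)/f_{u,s}(\theta)$ is strictly increasing in $\theta$. Let $v_q>0$, $v_u>0$, $\omega>0$, $r=v_q/v_u$, $\underline{c}<\bar{c}$, and put $\phi_s(\theta)=f_{u,s}(\theta)/f_{q,s}(\theta)$, $\tilde c_s(\theta)=\omega\,[F_{u,s}(\theta)-F_{q,s}(\theta)]$, $G(c)=\min\!\left(1,\frac{c-\underline{c}}{\bar c-\underline{c}}\right)$. Call a pair $(\tilde\theta_s,\pi_s)$ an equilibrium for group $s$ if $$\pi_s=\frac{\phi_s(\tilde\theta_s)}{r+\phi_s(\tilde\theta_s)}\quad\text{and}\quad \pi_s=G(\tilde c_s(\tilde\theta_s)).$$ Define the firm's welfare $\mathrm{FW}_s(\theta,\pi)=\pi(1-F_{q,s}(\theta))v_q-(1-\pi)(1-F_{u,s}(\theta))v_u$, the applicants' welfare $$\mathrm{AW}_s(\theta,\pi)=\omega\Bigl(\pi(1-F_{q,s}(\theta))+(1-\pi)(1-F_{u,s}(\theta))\Bigr)+\int_{\underline{c}}^{(1-\pi)\underline{c}+\pi\bar c}c\,\mathrm{d}c,$$ and the social welfare $\mathrm{SW}_s(\theta,\pi)=\mathrm{FW}_s(\theta,\pi)+\mathrm{AW}_s(\theta,\pi)$. Suppose $(\tilde\theta_s^{(1)},\pi_s^{(1)})$ and $(\tilde\theta_s^{(2)},\pi_s^{(2)})$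 are two equilibria for group $s$ with $\pi_s^{(1)}>\pi_s^{(2)}$, and let $\mathrm{SW}_s^{(i)}=\mathrm{SW}_s(\tilde\theta_s^{(i)},\pi_s^{(i)})$. Then $\mathrm{SW}_s^{(1)}>\mathrm{SW}_s^{(2)}$.
   Context: Game-theoretic model: applicants of group $s$ each draw a cost $c$ uniformly on $[\underline c,\bar c]$ and choose effort $e\in\{q,u\}$ (qualified/unqualified); a classifier score $\theta$ has density $f_{e,s}$ given $e,s$; the firm accepts applicants with $\theta>\tilde\theta_s$, earning $v_q$ per accepted qualified and losing $v_u$ per accepted unqualified applicant; accepted applicants receive $\omega$. $\pi_s$ is the fraction of qualified applicants in group $s$. The first equilibrium equation is the firm's optimal threshold condition (accept iff $\mathbb{P}(e=q\mid\theta,s)v_q-(1-\mathbb{P}(e=q\mid\theta,s))v_u\ge 0$), the second is the applicants' best response (invest iff $c<\tilde c_s(\tilde\theta_s)$). *)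

theory Defs
  imports "HOL-Analysis.Analysis"
begin

definition prob_density :: "(real \<Rightarrow> real) \<Rightarrow> bool" where
  "prob_density f \<longleftrightarrow> f \<in> borel_measurable lborel \<and> (\<forall>x. 0 \<le> f x)
     \<and> integrable lborel f \<and> (\<integral>x. f x \<partial>lborel) = 1"

definition cdf_of :: "(real \<Rightarrow> real) \<Rightarrow> real \<Rightarrow> real" where
  "cdf_of f \<theta> = (LINT x:{..\<theta>}|lborel. f x)"

definition phi :: "(real \<Rightarrow> real) \<Rightarrow> (real \<Rightarrow> real) \<Rightarrow> real \<Rightarrow> real" where
  "phi fq fu \<theta> = fu \<theta> / fq \<theta>"

definition ctilde :: "real \<Rightarrow> (real \<Rightarrow> real) \<Rightarrow> (real \<Rightarrow> real) \<Rightarrow> real \<Rightarrow> real" where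
  "ctilde \<omega> fq fu \<theta> = \<omega> * (cdf_of fu \<theta> - cdf_of fq \<theta>)"

definition Gcost :: "real \<Rightarrow> real \<Rightarrow> real \<Rightarrow> real" where
  "Gcost cl ch c = min 1 ((c - cl) / (ch - cl))"

definition is_equilibrium ::
  "real \<Rightarrow> real \<Rightarrow> real \<Rightarrow> real \<Rightarrow> real \<Rightarrow> (real \<Rightarrow> real) \<Rightarrow> (real \<Rightarrow> real)
    \<Rightarrow> real \<Rightarrow> real \<Rightarrow> bool" where
  "is_equilibrium vq vu \<omega> cl ch fq fu \<theta> \<pi> \<longleftrightarrow>
     \<pi> = phi fq fu \<theta> / (vq / vu + phi fq fu \<theta>) \<and>
     \<pi> = Gcost cl ch (ctilde \<omega> fq fu \<theta>)"

definition FW :: "real \<Rightarrow> real \<Rightarrow> (real \<Rightarrow> real) \<Rightarrow> (real \<Rightarrow> real) \<Rightarrow> real \<Rightarrow> real \<Rightarrow> real" where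
  "FW vq vu fq fu \<theta> \<pi> = \<pi> * (1 - cdf_of fq \<theta>) * vq - (1 - \<pi>) * (1 - cdf_of fu \<theta>) * vu"

definition AW :: "real \<Rightarrow> real \<Rightarrow> real \<Rightarrow> (real \<Rightarrow> real) \<Rightarrow> (real \<Rightarrow> real) \<Rightarrow> real \<Rightarrow> real \<Rightarrow> real" where
  "AW \<omega> cl ch fq fu \<theta> \<pi> =
     \<omega> * (\<pi> * (1 - cdf_of fq \<theta>) + (1 - \<pi>) * (1 - cdf_of fu \<theta>))
     + integral {cl .. (1 - \<pi>) * cl + \<pi> * ch} (\<lambda>c. c)"

definition SW :: "real \<Rightarrow> real \<Rightarrow> real \<Rightarrow> real \<Rightarrow> real \<Rightarrow> (real \<Rightarrow> real) \<Rightarrow> (real \<Rightarrow> real)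
    \<Rightarrow> real \<Rightarrow> real \<Rightarrow> real" where
  "SW vq vu \<omega> cl ch fq fu \<theta> \<pi> = FW vq vu fq fu \<theta> \<pi> + AW \<omega> cl ch fq fu \<theta> \<pi>"

end

(* At the equilibrium with the larger share pi of qualified applicants the threshold theta is
   lower: the equilibrium condition fixes the likelihood ratio fq/fu at theta as a decreasing
   function of pi, and that ratio is increasing in theta.  The firm gains because its welfare is
   increasing in pi and an equilibrium threshold, where the firm is indifferent, is its best
   response.  The applicants gain strictly: the lower threshold accepts more of them, and the
   cost cut-off c = (1 - pi) cl + pi ch, which equals omega (Fu - Fq) >= 0 by stochastic
   dominance, is larger, so pi c + (c^2 - cl^2) / 2 increases. *)

theory Submission
  imports Defs
begin

lemma set_integral_nonneg:
  fixes f :: "_ \<Rightarrow> real"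
  shows "(\<And>x. x \<in> A \<Longrightarrow> 0 \<le> f x) \<Longrightarrow> 0 \<le> (LINT x:A|M. f x)"
  unfolding set_lebesgue_integral_def
  by (auto intro: Bochner_Integration.integral_nonneg split: split_indicator)

lemma set_integral_nonpos:
  fixes f :: "_ \<Rightarrow> real"
  shows "(\<And>x. x \<in> A \<Longrightarrow> f x \<le> 0) \<Longrightarrow> (LINT x:A|M. f x) \<le> 0"
  using set_integral_nonneg[of A "\<lambda>x. - f x" M]
  by (simp add: set_lebesgue_integral_def)

lemma prob_density_set_integrable:
  assumes "prob_density f" "A \<in> sets borel"
  shows "set_integrable lborel A f"
  using assms unfolding prob_density_def set_integrable_def
  by (intro integrable_mult_indicator) auto

lemma set_integral_density_combination:
  assumes "prob_density f" "prob_density g" "A \<in> sets borel"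
  shows "(LINT x:A|lborel. a * f x - b * g x)
           = a * (LINT x:A|lborel. f x) - b * (LINT x:A|lborel. g x)"
  using prob_density_set_integrable[OF assms(1,3)] prob_density_set_integrable[OF assms(2,3)]
  by (subst set_integral_diff) auto

lemma cdf_of_nonneg: "prob_density f \<Longrightarrow> 0 \<le> cdf_of f t"
  unfolding cdf_of_def prob_density_def by (auto intro: set_integral_nonneg)

lemma one_minus_cdf_of:
  assumes "prob_density f"
  shows "1 - cdf_of f t = (LINT x:{t<..}|lborel. f x)"
proof -
  have "(LINT x:UNIV|lborel. f x) = 1"
    using assms unfolding prob_density_def set_lebesgue_integral_def by simp
  moreover have "UNIV = {..t} \<union> {t<..}" by auto
  ultimately have "(LINT x:{..t} \<union> {t<..}|lborel. f x) = 1" by simp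
  then show ?thesis
    unfolding cdf_of_def
    by (subst (asm) set_integral_Un) (auto intro: prob_density_set_integrable[OF assms])
qed

lemma cdf_of_le_1:
  assumes "prob_density f"
  shows "cdf_of f t \<le> 1"
proof -
  have "0 \<le> (LINT x:{t<..}|lborel. f x)"
    using assms unfolding prob_density_def by (auto intro: set_integral_nonneg)
  then show ?thesis using one_minus_cdf_of[OF assms, of t] by simp
qed

lemma cdf_of_add_increment:
  assumes "prob_density f" "s \<le> t"
  shows "cdf_of f t = cdf_of f s + (LINT x:{s<..t}|lborel. f x)"
proof -
  have "{..t} = {..s} \<union> {s<..t}" using assms(2) by auto
  then show ?thesis
    unfolding cdf_of_def
    by (simp only:) (rule set_integral_Un; auto intro: prob_density_set_integrable[OF assms(1)])
qed

lemma cdf_of_mono: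
  assumes "prob_density f" "s \<le> t"
  shows "cdf_of f s \<le> cdf_of f t"
  using assms unfolding cdf_of_add_increment[OF assms] prob_density_def
  by (auto intro: set_integral_nonneg)

lemma cdf_of_combination_increment:
  assumes "prob_density f" "prob_density g" "s \<le> t"
  shows "(a * cdf_of f t - b * cdf_of g t) - (a * cdf_of f s - b * cdf_of g s)
           = (LINT x:{s<..t}|lborel. a * f x - b * g x)"
  by (simp add: set_integral_density_combination[OF assms(1,2)] algebra_simps
      cdf_of_add_increment[OF assms(1,3)] cdf_of_add_increment[OF assms(2,3)])

lemma density_combination_sign:
  fixes f g :: "real \<Rightarrow> real"
  assumes g_pos: "\<forall>x. 0 < g x" and ratio: "mono (\<lambda>x. f x / g x)" and "0 \<le> a"
    and root: "a * f \<theta> = b * g \<theta>"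
  shows "\<theta> \<le> x \<Longrightarrow> 0 \<le> a * f x - b * g x"
    and "x \<le> \<theta> \<Longrightarrow> a * f x - b * g x \<le> 0"
proof -
  have "g \<theta> > 0" and gx: "g x > 0" using g_pos by auto
  then have eq: "a * f x - b * g x = g x * a * (f x / g x - f \<theta> / g \<theta>)"
    using root by (simp add: field_simps)
  show "\<theta> \<le> x \<Longrightarrow> 0 \<le> a * f x - b * g x"
    using monoD[OF ratio, of \<theta> x] gx \<open>0 \<le> a\<close> unfolding eq by simp
  show "x \<le> \<theta> \<Longrightarrow> a * f x - b * g x \<le> 0"
    using monoD[OF ratio, of x \<theta>] gx \<open>0 \<le> a\<close> unfolding eq
    by (simp add: mult_nonneg_nonpos)
qed

text \<open>First-order stochastic dominance. With k = f t / g t, f lies below k g left of t and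
  above it right of t; compare F with k G if k \<le> 1, and 1 - F with k (1 - G) otherwise.\<close>

lemma cdf_of_le_of_mono_ratio:
  assumes f: "prob_density f" and g: "prob_density g"
    and g_pos: "\<forall>x. 0 < g x" and ratio: "mono (\<lambda>x. f x / g x)"
  shows "cdf_of f t \<le> cdf_of g t"
proof -
  define k where "k = f t / g t"
  have "g t > 0" using g_pos by simp
  then have root: "1 * f t = k * g t" by (simp add: k_def)
  have left: "cdf_of f t \<le> k * cdf_of g t"
  proof -
    have "(LINT x:{..t}|lborel. 1 * f x - k * g x) \<le> 0"
      using density_combination_sign(2)[OF g_pos ratio _ root] by (auto intro: set_integral_nonpos)
    then show ?thesis
      using set_integral_density_combination[OF f g, of "{..t}" 1 k] by (simp add: cdf_of_def)
  qed
  have right: "k * (1 - cdf_of g t) \<le> 1 - cdf_of f t"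
  proof -
    have "0 \<le> (LINT x:{t<..}|lborel. 1 * f x - k * g x)"
      using density_combination_sign(1)[OF g_pos ratio _ root] by (auto intro: set_integral_nonneg)
    then show ?thesis
      using set_integral_density_combination[OF f g, of "{t<..}" 1 k]
      by (simp add: one_minus_cdf_of f g)
  qed
  show ?thesis
  proof (cases "k \<le> 1")
    case True
    then have "k * cdf_of g t \<le> cdf_of g t"
      using mult_right_mono[OF True cdf_of_nonneg[OF g]] by simp
    with left show ?thesis by linarith
  next
    case False
    then have "1 - cdf_of g t \<le> k * (1 - cdf_of g t)"
      using mult_right_mono[of 1 k "1 - cdf_of g t"] cdf_of_le_1[OF g] by simp
    with right show ?thesis by linarith
  qed
qed

lemma ctilde_nonneg:
  assumes "prob_density fq" "prob_density fu" "\<forall>x. 0 < fu x" "mono (\<lambda>x. fq x / fu x)"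
    and "0 \<le> \<omega>"
  shows "0 \<le> ctilde \<omega> fq fu \<theta>"
  using cdf_of_le_of_mono_ratio[OF assms(1-4), of \<theta>] \<open>0 \<le> \<omega>\<close> by (simp add: ctilde_def)

lemma FW_mono_prior:
  assumes "prob_density fq" "prob_density fu" "0 \<le> vq" "0 \<le> vu" "\<pi>' \<le> \<pi>"
  shows "FW vq vu fq fu \<theta> \<pi>' \<le> FW vq vu fq fu \<theta> \<pi>"
proof -
  have "FW vq vu fq fu \<theta> \<pi> - FW vq vu fq fu \<theta> \<pi>'
          = (\<pi> - \<pi>') * ((1 - cdf_of fq \<theta>) * vq + (1 - cdf_of fu \<theta>) * vu)"
    by (simp add: FW_def algebra_simps)
  also have "\<dots> \<ge> 0"
    using assms cdf_of_le_1[OF assms(1)] cdf_of_le_1[OF assms(2)] by simp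
  finally show ?thesis by simp
qed

text \<open>The firm's marginal payoff density \<open>\<pi> vq fq - (1 - \<pi>) vu fu\<close> changes sign
  from negative to positive at a point of indifference, which is therefore a best response.\<close>

lemma FW_le_at_indifference_threshold:
  assumes fq: "prob_density fq" and fu: "prob_density fu"
    and fu_pos: "\<forall>x. 0 < fu x" and ratio: "mono (\<lambda>x. fq x / fu x)"
    and "0 \<le> \<pi> * vq" and indifferent: "\<pi> * vq * fq \<theta> = (1 - \<pi>) * vu * fu \<theta>"
  shows "FW vq vu fq fu \<theta>' \<pi> \<le> FW vq vu fq fu \<theta> \<pi>"
proof -
  define K where "K t = \<pi> * vq * cdf_of fq t - (1 - \<pi>) * vu * cdf_of fu t" for t
  have FW_eq: "FW vq vu fq fu t \<pi> = \<pi> * vq - (1 - \<pi>) * vu - K t" for t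
    by (simp add: FW_def K_def algebra_simps)
  note sign = density_combination_sign[OF fu_pos ratio \<open>0 \<le> \<pi> * vq\<close> indifferent]
  have "K \<theta> \<le> K \<theta>'"
  proof (cases "\<theta> \<le> \<theta>'")
    case True
    have "0 \<le> (LINT x:{\<theta><..\<theta>'}|lborel. \<pi> * vq * fq x - (1 - \<pi>) * vu * fu x)"
      using sign(1) by (auto intro: set_integral_nonneg)
    then show ?thesis
      using cdf_of_combination_increment[OF fq fu True, of "\<pi> * vq" "(1 - \<pi>) * vu"]
      by (simp add: K_def)
  next
    case False
    have "(LINT x:{\<theta>'<..\<theta>}|lborel. \<pi> * vq * fq x - (1 - \<pi>) * vu * fu x) \<le> 0"
      using sign(2) by (auto intro: set_integral_nonpos)
    then show ?thesis
      using cdf_of_combination_increment[OF fq fu, of \<theta>' \<theta> "\<pi> * vq" "(1 - \<pi>) * vu"] False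
      by (simp add: K_def)
  qed
  then show ?thesis unfolding FW_eq by simp
qed

lemma AW_eq:
  assumes "0 \<le> \<pi>" "cl \<le> ch"
  shows "AW \<omega> cl ch fq fu \<theta> \<pi> = \<omega> * (1 - cdf_of fu \<theta>) + \<pi> * ctilde \<omega> fq fu \<theta>
           + (((1 - \<pi>) * cl + \<pi> * ch)\<^sup>2 - cl\<^sup>2) / 2"
proof -
  have "cl \<le> (1 - \<pi>) * cl + \<pi> * ch"
    using mult_nonneg_nonneg[of \<pi> "ch - cl"] assms by (simp add: algebra_simps)
  then show ?thesis by (simp add: AW_def ctilde_def algebra_simps)
qed

lemma AW_strict_mono_cost_threshold:
  assumes "0 \<le> \<pi>'" "\<pi>' < \<pi>" "cl < ch" and "cdf_of fu \<theta> \<le> cdf_of fu \<theta>'"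
    and "0 \<le> ctilde \<omega> fq fu \<theta>'" "0 \<le> \<omega>"
    and c: "ctilde \<omega> fq fu \<theta> = (1 - \<pi>) * cl + \<pi> * ch"
    and c': "ctilde \<omega> fq fu \<theta>' = (1 - \<pi>') * cl + \<pi>' * ch"
  shows "AW \<omega> cl ch fq fu \<theta>' \<pi>' < AW \<omega> cl ch fq fu \<theta> \<pi>"
proof -
  define C C' where "C = ctilde \<omega> fq fu \<theta>" and "C' = ctilde \<omega> fq fu \<theta>'"
  have AW: "AW \<omega> cl ch fq fu \<theta> \<pi> = \<omega> * (1 - cdf_of fu \<theta>) + \<pi> * C + (C\<^sup>2 - cl\<^sup>2) / 2"
    using AW_eq[of \<pi> cl ch] assms(1-3) by (simp add: c C_def)
  have AW': "AW \<omega> cl ch fq fu \<theta>' \<pi>' = \<omega> * (1 - cdf_of fu \<theta>') + \<pi>' * C' + (C'\<^sup>2 - cl\<^sup>2) / 2"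
    using AW_eq[of \<pi>' cl ch] assms(1,3) by (simp add: c' C'_def)
  have "C - C' = (\<pi> - \<pi>') * (ch - cl)" using c c' by (simp add: C_def C'_def algebra_simps)
  then have "C' < C" using assms(2,3) by (metis diff_gt_0_iff_gt zero_less_mult_iff)
  then have "\<pi>' * C' \<le> \<pi> * C" and "C'\<^sup>2 < C\<^sup>2"
    using assms(1,2,5) by (auto simp: C_def C'_def intro: mult_mono power_strict_mono)
  moreover have "\<omega> * (1 - cdf_of fu \<theta>') \<le> \<omega> * (1 - cdf_of fu \<theta>)"
    using assms(4,6) by (simp add: mult_left_mono)
  ultimately show ?thesis unfolding AW AW' by (simp add: field_simps)
qed

lemma equilibrium_prior_bounds:
  assumes "is_equilibrium vq vu \<omega> cl ch fq fu \<theta> \<pi>"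
    and "0 < vq" "0 < vu" "0 < fq \<theta>" "0 < fu \<theta>"
  shows "0 < \<pi>" "\<pi> < 1"
proof -
  have "\<pi> = phi fq fu \<theta> / (vq / vu + phi fq fu \<theta>)" "0 < phi fq fu \<theta>" "0 < vq / vu"
    using assms by (auto simp: is_equilibrium_def phi_def)
  then show "0 < \<pi>" "\<pi> < 1" by simp_all
qed

lemma equilibrium_indifference:
  assumes "is_equilibrium vq vu \<omega> cl ch fq fu \<theta> \<pi>"
    and "0 < vq" "0 < vu" "0 < fq \<theta>" "0 < fu \<theta>"
  shows "\<pi> * vq * fq \<theta> = (1 - \<pi>) * vu * fu \<theta>"
proof -
  have "0 < vq * fq \<theta> + vu * fu \<theta>" using assms(2-5) by (intro add_pos_pos mult_pos_pos)
  moreover have "\<pi> = vu * fu \<theta> / (vq * fq \<theta> + vu * fu \<theta>)"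
    using assms by (simp add: is_equilibrium_def phi_def field_simps)
  ultimately show ?thesis by (simp add: field_simps)
qed

lemma equilibrium_cost_threshold:
  assumes "is_equilibrium vq vu \<omega> cl ch fq fu \<theta> \<pi>" "cl < ch" "\<pi> < 1"
  shows "ctilde \<omega> fq fu \<theta> = (1 - \<pi>) * cl + \<pi> * ch"
proof -
  have "\<pi> = (ctilde \<omega> fq fu \<theta> - cl) / (ch - cl)"
    using assms by (auto simp: is_equilibrium_def Gcost_def min_def split: if_splits)
  then show ?thesis using assms(2) by (simp add: field_simps)
qed

text \<open>By the indifference condition the likelihood ratio at an equilibrium threshold is
  the odds \<open>(1 - \<pi>) / \<pi>\<close> scaled by \<open>vu / vq\<close>, which decreases in \<pi>.\<close>

lemma equilibrium_threshold_less:
  assumes eq1: "is_equilibrium vq vu \<omega> cl ch fq fu \<theta>1 \<pi>1"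
    and eq2: "is_equilibrium vq vu \<omega> cl ch fq fu \<theta>2 \<pi>2"
    and vq: "0 < vq" and vu: "0 < vu" and pos: "\<forall>x. 0 < fq x" "\<forall>x. 0 < fu x"
    and ratio: "strict_mono (\<lambda>x. fq x / fu x)" and "\<pi>2 < \<pi>1"
  shows "\<theta>1 < \<theta>2"
proof -
  have ratio_eq: "fq \<theta> / fu \<theta> = (1 - \<pi>) / \<pi> * (vu / vq)"
    if "is_equilibrium vq vu \<omega> cl ch fq fu \<theta> \<pi>" for \<theta> \<pi>
  proof -
    have "0 < fq \<theta>" "0 < fu \<theta>" using pos by auto
    with equilibrium_prior_bounds[OF that vq vu] equilibrium_indifference[OF that vq vu]
    show ?thesis using vq by (simp add: field_simps)
  qed
  have "0 < \<pi>2" using equilibrium_prior_bounds[OF eq2 vq vu] pos by simp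
  then have "(1 - \<pi>1) / \<pi>1 < (1 - \<pi>2) / \<pi>2"
    using \<open>\<pi>2 < \<pi>1\<close> by (simp add: field_simps)
  then have "fq \<theta>1 / fu \<theta>1 < fq \<theta>2 / fu \<theta>2"
    unfolding ratio_eq[OF eq1] ratio_eq[OF eq2] using vq vu by (intro mult_strict_right_mono) auto
  then show ?thesis using strict_mono_less[OF ratio] by blast
qed

theorem theorem1:
  fixes fq fu :: "real \<Rightarrow> real" and vq vu \<omega> cl ch \<theta>1 \<pi>1 \<theta>2 \<pi>2 :: real
  assumes dq: "prob_density fq" and du: "prob_density fu"
    and posq: "\<forall>x. 0 < fq x" and posu: "\<forall>x. 0 < fu x"
    and mlr: "strict_mono (\<lambda>\<theta>. fq \<theta> / fu \<theta>)"
    and vq: "vq > 0" and vu: "vu > 0" and om: "\<omega> > 0" and cc: "cl < ch"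
    and eq1: "is_equilibrium vq vu \<omega> cl ch fq fu \<theta>1 \<pi>1"
    and eq2: "is_equilibrium vq vu \<omega> cl ch fq fu \<theta>2 \<pi>2"
    and gt: "\<pi>1 > \<pi>2"
  shows "SW vq vu \<omega> cl ch fq fu \<theta>1 \<pi>1 > SW vq vu \<omega> cl ch fq fu \<theta>2 \<pi>2"
proof -
  have ratio: "mono (\<lambda>\<theta>. fq \<theta> / fu \<theta>)" using mlr by (rule strict_mono_mono)
  have \<pi>1: "0 < \<pi>1" "\<pi>1 < 1" and \<pi>2: "0 < \<pi>2" "\<pi>2 < 1"
    using equilibrium_prior_bounds[OF eq1 vq vu] equilibrium_prior_bounds[OF eq2 vq vu] posq posu
    by auto
  have "\<theta>1 < \<theta>2" by (rule equilibrium_threshold_less[OF eq1 eq2 vq vu posq posu mlr gt])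
  have "FW vq vu fq fu \<theta>2 \<pi>2 \<le> FW vq vu fq fu \<theta>2 \<pi>1"
    using dq du vq vu gt by (intro FW_mono_prior) auto
  also have "\<dots> \<le> FW vq vu fq fu \<theta>1 \<pi>1"
    using equilibrium_indifference[OF eq1 vq vu] posq posu \<pi>1 vq
    by (intro FW_le_at_indifference_threshold[OF dq du posu ratio]) auto
  finally have FW: "FW vq vu fq fu \<theta>2 \<pi>2 \<le> FW vq vu fq fu \<theta>1 \<pi>1" .
  have "AW \<omega> cl ch fq fu \<theta>2 \<pi>2 < AW \<omega> cl ch fq fu \<theta>1 \<pi>1"
    using \<pi>2 gt cc cdf_of_mono[OF du less_imp_le[OF \<open>\<theta>1 < \<theta>2\<close>]] om
      ctilde_nonneg[OF dq du posu ratio, of \<omega> \<theta>2]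
      equilibrium_cost_threshold[OF eq1 cc \<pi>1(2)] equilibrium_cost_threshold[OF eq2 cc \<pi>2(2)]
    by (intro AW_strict_mono_cost_threshold) auto
  with FW show ?thesis unfolding SW_def by simp
qed

end
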